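(* For all integers $k,l\ge1$, $La^*([k]\times[l],\{\vee_2,\wedge_2\})=k+l-1$.
   Context: $[k]\times[l]$ is ordered coordinatewise. $\vee_2$ is the poset on three elements $a,b_1,b_2$ whose only relations are $a<b_1,a<b_2$; $\wedge_2$ is the poset on three elements $a,b_1,b_2$ whose only relations are $b_1<a,b_2<a$. For posets $P,R$, $P$ is a strong subposet of $R$ if there is an injection $i:P\to R$ with $p\le_P p'\iff i(p)\le_R i(p')$. A subset $F\subseteq Q$ is strong $\{\vee_2,\wedge_2\}$-free if neither $\vee_2$ nor $\wedge_2$ is a strong subposet of $F$ (induced order); $La^*(Q,\{\vee_2,\wedge_2\})$ is the maximum size of such a subset of $Q$. *)

theory Defs
  imports Main
begin

definition strong_subposet ::
  "'a set \<Rightarrow> ('a \<Rightarrow> 'a \<Rightarrow> bool) \<Rightarrow> 'b set \<Rightarrow> ('b \<Rightarrow> 'b \<Rightarrow> bool) \<Rightarrow> bool" where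
  "strong_subposet P leP R leR \<longleftrightarrow>
     (\<exists>i. inj_on i P \<and> i ` P \<subseteq> R \<and>
          (\<forall>p\<in>P. \<forall>p'\<in>P. leP p p' \<longleftrightarrow> leR (i p) (i p')))"

(* The three-element posets vee_2 and wedge_2 on elements a = 0, b1 = 1, b2 = 2. *)
definition three :: "nat set" where "three = {0, 1, 2}"

definition vee2_le :: "nat \<Rightarrow> nat \<Rightarrow> bool" where
  "vee2_le x y \<longleftrightarrow> x = y \<or> (x = 0 \<and> (y = 1 \<or> y = 2))"

definition wedge2_le :: "nat \<Rightarrow> nat \<Rightarrow> bool" where
  "wedge2_le x y \<longleftrightarrow> x = y \<or> ((x = 1 \<or> x = 2) \<and> y = 0)"

definition grid :: "nat \<Rightarrow> nat \<Rightarrow> (nat \<times> nat) set" where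
  "grid k l = {1..k} \<times> {1..l}"

definition grid_le :: "nat \<times> nat \<Rightarrow> nat \<times> nat \<Rightarrow> bool" where
  "grid_le p q \<longleftrightarrow> fst p \<le> fst q \<and> snd p \<le> snd q"

definition vw_free :: "(nat \<times> nat) set \<Rightarrow> bool" where
  "vw_free F \<longleftrightarrow> \<not> strong_subposet three vee2_le F grid_le
                 \<and> \<not> strong_subposet three wedge2_le F grid_le"

definition La_star_grid :: "nat \<Rightarrow> nat \<Rightarrow> nat" where
  "La_star_grid k l = Max (card ` {F. F \<subseteq> grid k l \<and> vw_free F})"

end

theory Submission
  imports Defs
begin

(* Lower bound: the hook along the bottom row and the right column is a chain of
   k + l - 1 points, and a chain contains no incomparable pair, which both vee_2
   and wedge_2 do.
   Upper bound: in a vee_2-free set, the points that are not the top of their column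
   lie in pairwise distinct rows (two of them in one row, together with a point above
   the left one, form a vee_2), and none of them is in the top row. So there are at
   most k column tops and at most l - 1 other points. *)

lemma chain_not_strong_subposet:
  assumes chain: "\<forall>p\<in>F. \<forall>q\<in>F. leR p q \<or> leR q p"
    and "\<not> leP 1 2" "\<not> leP 2 1"
  shows "\<not> strong_subposet three leP F leR"
proof
  assume "strong_subposet three leP F leR"
  then obtain i where i: "i ` three \<subseteq> F" "\<forall>a\<in>three. \<forall>b\<in>three. leP a b \<longleftrightarrow> leR (i a) (i b)"
    unfolding strong_subposet_def by blast
  have three: "1 \<in> three" "2 \<in> three" by (auto simp: three_def)
  then have "leR (i 1) (i 2) \<or> leR (i 2) (i 1)"
    using i(1) chain by blast
  with i(2) three assms(2,3) show False by blast
qed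

lemma vw_free_if_chain:
  assumes "\<forall>p\<in>F. \<forall>q\<in>F. grid_le p q \<or> grid_le q p"
  shows "vw_free F"
  using chain_not_strong_subposet[OF assms]
  by (simp add: vw_free_def vee2_le_def wedge2_le_def)

definition hook :: "nat \<Rightarrow> nat \<Rightarrow> (nat \<times> nat) set" where
  "hook k l = {1..k} \<times> {1} \<union> {k} \<times> {1..l}"

lemma hook_subset_grid:
  assumes "k \<ge> 1" "l \<ge> 1"
  shows "hook k l \<subseteq> grid k l"
  using assms by (auto simp: hook_def grid_def)

lemma card_hook:
  assumes "k \<ge> 1" "l \<ge> 1"
  shows "card (hook k l) = k + l - 1"
proof -
  have corner: "({1..k} \<times> {1}) \<inter> ({k} \<times> {1..l}) = {(k, 1)}"
    using assms by auto
  have "card (hook k l) + card {(k, 1::nat)} = card ({1..k} \<times> {1::nat}) + card ({k} \<times> {1..l})"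
    unfolding hook_def corner[symmetric] by (rule card_Un_Int[symmetric]) auto
  then show ?thesis by (simp add: card_cartesian_product)
qed

lemma vw_free_hook: "vw_free (hook k l)"
  by (rule vw_free_if_chain) (auto simp: hook_def grid_le_def)

definition column_top :: "(nat \<times> nat) set \<Rightarrow> nat \<times> nat \<Rightarrow> bool" where
  "column_top F p \<longleftrightarrow> (\<forall>q\<in>F. fst q = fst p \<longrightarrow> snd q \<le> snd p)"

lemma inj_on_fst_column_top: "inj_on fst {p \<in> F. column_top F p}"
  by (rule inj_onI) (auto simp: column_top_def prod_eq_iff intro: order_antisym)

lemma strong_subposet_vee2_corner:
  assumes "p \<in> F" "q \<in> F" "r \<in> F"
    and "fst p < fst q" "snd q = snd p" "fst r = fst p" "snd p < snd r"
  shows "strong_subposet three vee2_le F grid_le"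
proof -
  define i where "i = (\<lambda>n::nat. if n = 0 then p else if n = 1 then r else q)"
  have "inj_on i three"
    using assms by (auto simp: inj_on_def three_def i_def prod_eq_iff)
  moreover have "i ` three \<subseteq> F"
    using assms by (auto simp: three_def i_def)
  moreover have "\<forall>a\<in>three. \<forall>b\<in>three. vee2_le a b \<longleftrightarrow> grid_le (i a) (i b)"
    using assms by (auto simp: three_def i_def vee2_le_def grid_le_def)
  ultimately show ?thesis unfolding strong_subposet_def by blast
qed

lemma inj_on_snd_not_column_top:
  assumes "\<not> strong_subposet three vee2_le F grid_le"
  shows "inj_on snd {p \<in> F. \<not> column_top F p}"
proof -
  have False if "p \<in> F" "q \<in> F" "\<not> column_top F p" "fst p < fst q" "snd q = snd p" for p q
  proof -
    obtain r where "r \<in> F" "fst r = fst p" "snd p < snd r"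
      using \<open>\<not> column_top F p\<close> by (auto simp: column_top_def not_le)
    with that assms strong_subposet_vee2_corner show False by blast
  qed
  then show ?thesis
    by (intro inj_onI) (metis (mono_tags, lifting) mem_Collect_eq linorder_neq_iff prod_eq_iff)
qed

lemma card_le_if_vee2_free:
  assumes grid: "F \<subseteq> grid k l" and vee_free: "\<not> strong_subposet three vee2_le F grid_le"
  shows "card F \<le> k + l - 1"
proof (cases "F = {}")
  case False
  define T where "T = {p \<in> F. column_top F p}"
  define N where "N = {p \<in> F. \<not> column_top F p}"
  have fin: "finite F"
    using grid finite_subset by (auto simp: grid_def)
  have "l \<ge> 1"
    using False grid by (force simp: grid_def)
  have "card T = card (fst ` T)"
    using inj_on_fst_column_top by (simp add: T_def card_image)
  also have "\<dots> \<le> card {1..k}"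
    using grid by (intro card_mono) (auto simp: T_def grid_def)
  finally have card_T: "card T \<le> k" by simp
  have "snd ` N \<subseteq> {1..<l}"
  proof
    fix y assume "y \<in> snd ` N"
    then obtain p where p: "p \<in> F" "\<not> column_top F p" "y = snd p" by (auto simp: N_def)
    then obtain r where "r \<in> F" "snd p < snd r" by (auto simp: column_top_def not_le)
    with p grid show "y \<in> {1..<l}" by (force simp: grid_def)
  qed
  then have "card (snd ` N) \<le> l - 1"
    using card_mono[of "{1..<l}"] by fastforce
  then have card_N: "card N \<le> l - 1"
    using inj_on_snd_not_column_top[OF vee_free] by (simp add: N_def card_image)
  have "F = T \<union> N" "T \<inter> N = {}" by (auto simp: T_def N_def)
  with fin have "card F = card T + card N" by (simp add: card_Un_disjoint)
  with card_T card_N \<open>l \<ge> 1\<close> show ?thesis by linarith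
qed simp

theorem theorem1p5:
  fixes k l :: nat
  assumes "k \<ge> 1" and "l \<ge> 1"
  shows "La_star_grid k l = k + l - 1"
  unfolding La_star_grid_def
proof (rule Max_eqI)
  have "finite (grid k l)" by (simp add: grid_def)
  then show "finite (card ` {F. F \<subseteq> grid k l \<and> vw_free F})" by simp
next
  fix n assume "n \<in> card ` {F. F \<subseteq> grid k l \<and> vw_free F}"
  then show "n \<le> k + l - 1"
    using card_le_if_vee2_free by (auto simp: vw_free_def)
next
  have "hook k l \<in> {F. F \<subseteq> grid k l \<and> vw_free F}"
    using hook_subset_grid[OF assms] vw_free_hook by blast
  then show "k + l - 1 \<in> card ` {F. F \<subseteq> grid k l \<and> vw_free F}"
    using card_hook[OF assms] by (metis image_eqI)
qed

end
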